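(* Let $a=\{a_k\}_{k=0}^\infty$ be a real sequence with $1=a_0>a_1\geq a_2\geq\cdots\geq a_{k-1}\geq a_k\geq\cdots$, $\lim_{k\to\infty}a_k=0$, and $\sum_{k=0}^\infty a_k=\infty$. Define $\{b_k\}_{k=0}^\infty$ by $b_0=1/a_0$ and $b_k=-\frac{1}{a_0}\sum_{j=0}^{k-1}a_{k-j}b_j$ for $k\geq1$, and let $u_k=\sum_{j=0}^k b_j$ for $k\geq 0$. Then $\lim_{k\to\infty}u_k=0$.
   Context: The sequence $\{b_k\}$ gives the entries of the inverse $B=A^{-1}$ of the half-infinite lower triangular Toeplitz matrix $A$ with entries $A_{ij}=a_{i-j}$ for $i\geq j$ (and $0$ otherwise); $B$ is again lower triangular Toeplitz with $B_{ij}=b_{i-j}$. The sequence $\{u_k\}$ of partial sums is called the fundamental matrix of $a$. *)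

theory Defs
  imports "HOL-Analysis.Analysis"
begin

function inv_toeplitz :: "(nat \<Rightarrow> real) \<Rightarrow> nat \<Rightarrow> real" where
  "inv_toeplitz a k =
     (if k = 0 then 1 / a 0
      else - (1 / a 0) * (\<Sum>j<k. a (k - j) * inv_toeplitz a j))"
  by auto
termination
  by (relation "Wellfounded.measure snd") auto

declare inv_toeplitz.simps [simp del]

definition fundamental_seq :: "(nat \<Rightarrow> real) \<Rightarrow> nat \<Rightarrow> real" where
  "fundamental_seq a k = (\<Sum>j\<le>k. inv_toeplitz a j)"

end

theory Submission
  imports Defs "HOL-Computational_Algebra.Formal_Power_Series"
begin

text \<open>
  Let \<open>f i = a (i - 1) - a i\<close> for \<open>i \<ge> 1\<close> and \<open>f 0 = 0\<close>. As power series,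
  \<open>1 - F = (1 - X) A\<close> and \<open>U = A\<^sup>-\<^sup>1 / (1 - X)\<close>, hence \<open>U = 1 + F U\<close>: \<open>u\<close> is the renewal
  sequence of the probability distribution \<open>f\<close>, whose tail beyond \<open>K\<close> has mass \<open>a K\<close>.
  In particular \<open>0 \<le> u \<le> 1\<close>. Let \<open>l\<close> be the limit superior of \<open>u\<close>, attained along \<open>r v\<close>.
  Because \<open>f 1 > 0\<close>, the renewal equation at \<open>r v\<close> can only come close to \<open>l\<close> if
  \<open>u (r v - 1)\<close> does, and inductively \<open>u (r v - k) \<longlonglongrightarrow> l\<close> for every \<open>k\<close>. Passing to the
  limit in \<open>\<Sum>k\<le>n. a k * u (n - k) = 1\<close> (the identity \<open>A U = 1 / (1 - X)\<close>) gives
  \<open>l * (\<Sum>k\<le>K. a k) \<le> 1\<close> for all \<open>K\<close>, so \<open>l = 0\<close> since \<open>a\<close> is not summable.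
\<close>

lemma inv_toeplitz_convolution:
  assumes "a 0 \<noteq> 0"
  shows "(\<Sum>i\<le>n. a i * inv_toeplitz a (n - i)) = (if n = 0 then 1 else 0)"
proof (cases "n = 0")
  case True
  then show ?thesis using assms by (simp add: inv_toeplitz.simps)
next
  case False
  have "(\<Sum>i\<le>n. a i * inv_toeplitz a (n - i)) = (\<Sum>j\<le>n. a (n - j) * inv_toeplitz a j)"
    by (subst sum.atLeastAtMost_rev[of _ 0, simplified atLeast0AtMost]) simp
  also have "\<dots> = (\<Sum>j<n. a (n - j) * inv_toeplitz a j) + a 0 * inv_toeplitz a n"
    by (simp add: lessThan_Suc_atMost[symmetric])
  also have "\<dots> = 0"
    using False assms by (simp add: inv_toeplitz.simps[of a n])
  finally show ?thesis using False by simp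
qed

lemma Abs_fps_mult_inv_toeplitz:
  "a 0 \<noteq> 0 \<Longrightarrow> Abs_fps a * Abs_fps (inv_toeplitz a) = 1"
  by (rule fps_ext) (simp add: fps_mult_nth atLeast0AtMost inv_toeplitz_convolution)

lemma Abs_fps_fundamental_seq:
  "Abs_fps (fundamental_seq a) = Abs_fps (inv_toeplitz a) * Abs_fps (\<lambda>_. 1)"
  by (rule fps_ext) (simp add: fps_mult_nth fundamental_seq_def atLeast0AtMost)

lemma one_minus_fps_X_mult_ones: "(1 - fps_X) * Abs_fps (\<lambda>_. 1 :: 'a :: field) = 1"
  using inverse_mult_eq_1[of "Abs_fps (\<lambda>_. 1 :: 'a)"] by (simp add: fps_inverse_gp')

lemma fundamental_seq_convolution:
  assumes "a 0 \<noteq> 0"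
  shows "(\<Sum>i\<le>n. a i * fundamental_seq a (n - i)) = 1"
proof -
  have "Abs_fps a * Abs_fps (fundamental_seq a) = Abs_fps (\<lambda>_. 1)"
    by (simp add: Abs_fps_fundamental_seq mult.assoc[symmetric] Abs_fps_mult_inv_toeplitz assms)
  then have "fps_nth (Abs_fps a * Abs_fps (fundamental_seq a)) n = 1" by simp
  then show ?thesis by (simp add: fps_mult_nth atLeast0AtMost)
qed

definition renewal_weight :: "(nat \<Rightarrow> real) \<Rightarrow> nat \<Rightarrow> real" where
  "renewal_weight a i = (if i = 0 then 0 else a (i - 1) - a i)"

lemma Abs_fps_renewal_weight:
  "a 0 = 1 \<Longrightarrow> Abs_fps (renewal_weight a) = 1 - (1 - fps_X) * Abs_fps a"
  by (rule fps_ext) (simp add: renewal_weight_def algebra_simps)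

lemma fundamental_seq_renewal:
  assumes "a 0 = 1"
  shows "fundamental_seq a n =
    (if n = 0 then 1 else 0) + (\<Sum>i\<le>n. renewal_weight a i * fundamental_seq a (n - i))"
proof -
  let ?U = "Abs_fps (fundamental_seq a)" and ?F = "Abs_fps (renewal_weight a)"
  have "?U * (1 - ?F) = ((1 - fps_X) * Abs_fps (\<lambda>_. 1)) * (Abs_fps a * Abs_fps (inv_toeplitz a))"
    by (simp add: Abs_fps_renewal_weight Abs_fps_fundamental_seq assms algebra_simps)
  also have "\<dots> = 1"
    by (simp add: one_minus_fps_X_mult_ones Abs_fps_mult_inv_toeplitz assms)
  finally have "?U = 1 + ?F * ?U" by (simp add: algebra_simps)
  then have "fps_nth ?U n = fps_nth (1 + ?F * ?U) n" by simp
  then show ?thesis by (simp add: fps_mult_nth atLeast0AtMost)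
qed

lemma sum_renewal_weight: "a 0 = 1 \<Longrightarrow> (\<Sum>i\<le>n. renewal_weight a i) = 1 - a n"
  by (induction n) (auto simp: renewal_weight_def)

lemma sum_renewal_weight_tail:
  "(\<Sum>i\<le>n. if K < i then renewal_weight a i else 0) = (if K < n then a K - a n else 0)"
  by (induction n) (auto simp: renewal_weight_def less_Suc_eq)

lemma bounded_seq_limsup_subseq:
  fixes u :: "nat \<Rightarrow> real"
  assumes "\<And>n. c \<le> u n" "\<And>n. u n \<le> d"
  obtains l r where "c \<le> l" "strict_mono r" "(\<lambda>v. u (r v)) \<longlonglongrightarrow> l"
    "\<And>\<delta>. \<delta> > 0 \<Longrightarrow> eventually (\<lambda>j. u j < l + \<delta>) sequentially"
proof -
  define L where "L = limsup (\<lambda>n. ereal (u n))"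
  obtain r where r: "strict_mono r" and rL: "((\<lambda>n. ereal (u n)) \<circ> r) \<longlonglongrightarrow> L"
    using limsup_subseq_lim unfolding L_def by blast
  have "L \<le> d" unfolding L_def by (rule Limsup_bounded) (use assms in auto)
  moreover have "c \<le> L" by (rule LIMSEQ_le_const[OF rL]) (use assms in auto)
  ultimately obtain l where L: "L = ereal l" by (cases L) auto
  show ?thesis
  proof
    show "c \<le> l" using \<open>c \<le> L\<close> L by simp
    show "(\<lambda>v. u (r v)) \<longlonglongrightarrow> l" using rL L by (simp add: o_def)
    show "eventually (\<lambda>j. u j < l + \<delta>) sequentially" if "\<delta> > 0" for \<delta>
    proof -
      have "limsup (\<lambda>n. ereal (u n)) < ereal (l + \<delta>)"
        using L that by (simp add: L_def[symmetric])
      from Limsup_lessD[OF this] show ?thesis by simp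
    qed
  qed (fact r)
qed

locale decreasing_to_zero =
  fixes a :: "nat \<Rightarrow> real"
  assumes a_0: "a 0 = 1"
    and a_1_less: "a 1 < a 0"
    and a_decreasing: "\<And>k. k \<ge> 1 \<Longrightarrow> a (Suc k) \<le> a k"
    and a_tendsto_0: "a \<longlonglongrightarrow> 0"
begin

abbreviation "u \<equiv> fundamental_seq a"
abbreviation "f \<equiv> renewal_weight a"

lemma a_antimono:
  assumes "1 \<le> n" "n \<le> m"
  shows "a m \<le> a n"
  using assms(2)
proof (induction m rule: dec_induct)
  case (step m)
  then show ?case using a_decreasing[of m] assms(1) by simp
qed simp

lemma a_nonneg: "a n \<ge> 0"
proof (cases "n = 0")
  case False
  then have "\<forall>m\<ge>n. a m \<le> a n" using a_antimono by simp
  then show ?thesis using LIMSEQ_le_const2[OF a_tendsto_0, of "a n"] by blast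
qed (simp add: a_0)

lemma f_nonneg: "f i \<ge> 0"
proof -
  consider "i = 0" | "i = 1" | "i \<ge> 2" by linarith
  then show ?thesis
    using a_1_less a_decreasing[of "i - 1"] by cases (auto simp: renewal_weight_def)
qed

lemma f_1: "0 < f 1" "f 1 \<le> 1"
  using a_1_less a_0 a_nonneg[of 1] by (auto simp: renewal_weight_def)

lemma f_tail_le: "(\<Sum>i\<le>n. if K < i then f i else 0) \<le> a K"
  using sum_renewal_weight_tail[of K a n] a_nonneg[of n] a_nonneg[of K] by simp

lemma u_renewal: "n \<noteq> 0 \<Longrightarrow> u n = (\<Sum>i\<le>n. f i * u (n - i))"
  using fundamental_seq_renewal[of a n] a_0 by simp

lemma u_bounds: "0 \<le> u n \<and> u n \<le> 1"
proof (induction n rule: less_induct)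
  case (less n)
  show ?case
  proof (cases "n = 0")
    case True
    then show ?thesis using fundamental_seq_renewal[of a 0] a_0 by (simp add: renewal_weight_def)
  next
    case False
    have terms: "0 \<le> f i * u (n - i) \<and> f i * u (n - i) \<le> f i" if "i \<le> n" for i
    proof (cases "i = 0")
      case False
      then show ?thesis using less[of "n - i"] \<open>n \<noteq> 0\<close> f_nonneg[of i] by (simp add: mult_left_le)
    qed (simp add: renewal_weight_def)
    have "0 \<le> u n" unfolding u_renewal[OF False] by (rule sum_nonneg) (use terms in blast)
    moreover have "u n \<le> (\<Sum>i\<le>n. f i)" unfolding u_renewal[OF False]
      by (rule sum_mono) (use terms in blast)
    ultimately show ?thesis using sum_renewal_weight[of a n] a_0 a_nonneg[of n] by simp
  qed
qed

text \<open>In the renewal sum for \<open>u n\<close> the terms \<open>2 \<le> i \<le> K\<close> are below \<open>f i * c\<close>, the terms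
  \<open>i > K\<close> add up to at most the tail \<open>a K\<close>, and only the term \<open>i = 1\<close> is kept exactly.\<close>
lemma u_le_by_previous:
  assumes "K \<ge> 1" and below: "\<forall>j\<ge>N. u j < c" and "c \<ge> 0" and "n \<ge> K + N"
  shows "u n \<le> c + a K + f 1 * (u (n - 1) - c)"
proof -
  define h where "h i = f i * c + (if K < i then f i else 0)
    + (if i = 1 then f 1 * (u (n - 1) - c) else 0)" for i
  have "f i * u (n - i) \<le> h i" if "i \<in> {..n}" for i
  proof -
    consider "i = 0" | "i = 1" | "2 \<le> i" "i \<le> K" | "K < i" by linarith
    then show ?thesis
    proof cases
      case 3
      then have "u (n - i) < c" using below assms(4) by simp
      then show ?thesis using 3 f_nonneg[of i] by (simp add: h_def mult_left_mono)
    next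
      case 4
      have "f i * u (n - i) \<le> f i" "0 \<le> f i * c"
        using f_nonneg[of i] u_bounds[of "n - i"] \<open>c \<ge> 0\<close> by (simp_all add: mult_left_le)
      then show ?thesis using 4 \<open>K \<ge> 1\<close> by (simp add: h_def)
    qed (use \<open>K \<ge> 1\<close> in \<open>auto simp: h_def renewal_weight_def algebra_simps\<close>)
  qed
  then have "(\<Sum>i\<le>n. f i * u (n - i)) \<le> (\<Sum>i\<le>n. h i)" by (rule sum_mono)
  moreover have "n \<noteq> 0" using assms by simp
  ultimately have "u n \<le> (\<Sum>i\<le>n. h i)" by (simp add: u_renewal)
  also have "\<dots> = c * (\<Sum>i\<le>n. f i) + (\<Sum>i\<le>n. if K < i then f i else 0) + f 1 * (u (n - 1) - c)"
    using assms by (simp add: h_def sum.distrib sum_distrib_left mult.commute)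
  also have "\<dots> \<le> c + a K + f 1 * (u (n - 1) - c)"
  proof -
    have "c * (\<Sum>i\<le>n. f i) \<le> c"
      using sum_renewal_weight[of a n] a_0 a_nonneg[of n] \<open>c \<ge> 0\<close> by (simp add: mult_left_le)
    then show ?thesis using f_tail_le[of K n] by simp
  qed
  finally show ?thesis .
qed

lemma tendsto_at_limsup_shift:
  assumes "l \<ge> 0" and m: "filterlim m sequentially sequentially"
    and conv: "(\<lambda>v. u (m v)) \<longlonglongrightarrow> l"
    and limsup: "\<And>\<delta>. \<delta> > 0 \<Longrightarrow> eventually (\<lambda>j. u j < l + \<delta>) sequentially"
  shows "(\<lambda>v. u (m v - 1)) \<longlonglongrightarrow> l"
proof (rule LIMSEQ_I)
  fix \<epsilon> :: real assume "\<epsilon> > 0"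
  define \<eta> where "\<eta> = f 1 * \<epsilon> / 4"
  have \<eta>: "\<eta> > 0" "\<eta> \<le> \<epsilon> / 4" using f_1 \<open>\<epsilon> > 0\<close> by (auto simp: \<eta>_def)
  obtain K0 where K0: "\<forall>n\<ge>K0. norm (a n - 0) < \<eta>" using LIMSEQ_D[OF a_tendsto_0 \<eta>(1)] by blast
  define K where "K = max K0 1"
  have K: "K \<ge> 1" "a K < \<eta>" using K0[rule_format, of K] by (auto simp: K_def)
  obtain N where N: "\<forall>j\<ge>N. u j < l + \<eta>"
    using limsup[OF \<eta>(1)] by (auto simp: eventually_sequentially)
  have "eventually (\<lambda>v. dist (u (m v)) l < \<eta> \<and> K + N + 1 \<le> m v) sequentially"
    using m by (intro eventually_conj tendstoD[OF conv \<eta>(1)]) (simp add: filterlim_at_top)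
  then obtain V where V: "\<And>v. v \<ge> V \<Longrightarrow> dist (u (m v)) l < \<eta> \<and> K + N + 1 \<le> m v"
    by (auto simp: eventually_sequentially)
  show "\<exists>V. \<forall>v\<ge>V. norm (u (m v - 1) - l) < \<epsilon>"
  proof (intro exI allI impI)
    fix v assume "V \<le> v"
    define n where "n = m v"
    have n: "n \<ge> K + N + 1" and "u n > l - \<eta>"
      using V[OF \<open>V \<le> v\<close>] by (auto simp: n_def dist_real_def)
    moreover have "u n \<le> (l + \<eta>) + a K + f 1 * (u (n - 1) - (l + \<eta>))"
      by (rule u_le_by_previous) (use K N n \<open>l \<ge> 0\<close> \<eta> in auto)
    \<comment> \<open>the total error \<open>3 * \<eta>\<close> is \<open>f 1 * (3 * \<epsilon> / 4)\<close>\<close>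
    ultimately have "f 1 * (u (n - 1) - l - \<eta> + 3 * \<epsilon> / 4) > 0"
      using K by (simp add: \<eta>_def algebra_simps)
    then have lower: "u (n - 1) > l - \<epsilon>" using f_1 \<eta> zero_less_mult_pos by fastforce
    have "u (n - 1) < l + \<eta>" using N n by simp
    with \<eta> have upper: "u (n - 1) < l + \<epsilon>" by linarith
    from lower upper show "norm (u (m v - 1) - l) < \<epsilon>" by (simp add: n_def abs_less_iff)
  qed
qed

lemma tendsto_at_limsup_shifts:
  assumes "l \<ge> 0" and "strict_mono r" and "(\<lambda>v. u (r v)) \<longlonglongrightarrow> l"
    and limsup: "\<And>\<delta>. \<delta> > 0 \<Longrightarrow> eventually (\<lambda>j. u j < l + \<delta>) sequentially"
  shows "(\<lambda>v. u (r v - k)) \<longlonglongrightarrow> l"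
proof (induction k)
  case (Suc k)
  have "filterlim (\<lambda>v. r v - k) sequentially sequentially"
    using filterlim_compose[OF filterlim_minus_const_nat_at_top filterlim_subseq[OF \<open>strict_mono r\<close>]] .
  from tendsto_at_limsup_shift[OF \<open>l \<ge> 0\<close> this Suc.IH limsup] show ?case by simp
qed (use assms in simp)

lemma limsup_mult_partial_sum_le:
  assumes "l \<ge> 0" and r: "strict_mono r" and "(\<lambda>v. u (r v)) \<longlonglongrightarrow> l"
    and "\<And>\<delta>. \<delta> > 0 \<Longrightarrow> eventually (\<lambda>j. u j < l + \<delta>) sequentially"
  shows "l * (\<Sum>k\<le>K. a k) \<le> 1"
proof -
  have "(\<lambda>v. \<Sum>k\<le>K. a k * u (r v - k)) \<longlonglongrightarrow> (\<Sum>k\<le>K. a k * l)"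
    by (intro tendsto_sum tendsto_mult_left tendsto_at_limsup_shifts[OF assms])
  moreover have "(\<Sum>k\<le>K. a k * u (r v - k)) \<le> 1" if "K \<le> v" for v
  proof -
    have "K \<le> r v" using seq_suble[OF r, of v] that by simp
    then have "(\<Sum>k\<le>K. a k * u (r v - k)) \<le> (\<Sum>k\<le>r v. a k * u (r v - k))"
      by (intro sum_mono2) (use a_nonneg u_bounds in auto)
    then show ?thesis using fundamental_seq_convolution[of a] a_0 by simp
  qed
  ultimately have "(\<Sum>k\<le>K. a k * l) \<le> 1" using LIMSEQ_le_const2 by blast
  then show ?thesis by (simp add: sum_distrib_left mult.commute)
qed

end

theorem theorem1:
  fixes a :: "nat \<Rightarrow> real"
  assumes "a 0 = 1"
    and "a 0 > a 1"
    and "\<And>k. k \<ge> 1 \<Longrightarrow> a (Suc k) \<le> a k"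
    and "a \<longlonglongrightarrow> 0"
    and "\<not> summable a"
  shows "fundamental_seq a \<longlonglongrightarrow> 0"
proof -
  interpret decreasing_to_zero a using assms(1-4) by unfold_locales
  obtain l r where "0 \<le> l" "strict_mono r" "(\<lambda>v. u (r v)) \<longlonglongrightarrow> l"
    and limsup: "\<And>\<delta>. \<delta> > 0 \<Longrightarrow> eventually (\<lambda>j. u j < l + \<delta>) sequentially"
    using bounded_seq_limsup_subseq[of 0 u 1] u_bounds by blast
  then have "l * (\<Sum>k\<le>K. a k) \<le> 1" for K by (rule limsup_mult_partial_sum_le)
  have "l = 0"
  proof (rule ccontr)
    assume "l \<noteq> 0"
    with \<open>0 \<le> l\<close> have "(\<Sum>k\<le>K. a k) \<le> 1 / l" for K
      using \<open>l * (\<Sum>k\<le>K. a k) \<le> 1\<close> by (simp add: field_simps mult.commute)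
    then have "summable a" using bounded_imp_summable a_nonneg by blast
    with assms(5) show False by simp
  qed
  show ?thesis
  proof (rule order_tendstoI)
    show "eventually (\<lambda>n. y < u n) sequentially" if "y < 0" for y
      using u_bounds that by (intro always_eventually) (meson less_le_trans)
    show "eventually (\<lambda>n. u n < y) sequentially" if "0 < y" for y
      using limsup that \<open>l = 0\<close> by simp
  qed
qed

end
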